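(* Let $A=(A,\oplus,\odot)$ be a skew brace, $B$ a characteristic subgroup of $A_{\oplus}$, and $W$ a set of group words. For $x\in A$ denote by $\overline{x}$ the image of $x$ under the natural homomorphism $A_{\oplus}\to A_{\oplus}/B$. If $W(\mathrm{Aut}(A_{\oplus}/B))=1$, then for all $a,b\in W(A_{\odot})$ the equalities $\overline{a\odot b}=\overline{a\oplus b}$ and $\overline{a^{-1}}=\overline{\ominus a}$ hold.
   Context: A skew brace is a set $A$ with two binary operations $\oplus,\odot$ such that $A_{\oplus}=(A,\oplus)$ and $A_{\odot}=(A,\odot)$ are groups and $a\odot(b\oplus c)=(a\odot b)\ominus a\oplus(a\odot c)$ for all $a,b,c\in A$. Here $\ominus a$ is the inverse of $a$ in $A_{\oplus}$ and $a^{-1}$ is the inverse of $a$ in $A_{\odot}$. A group word is an element $w(x_1,\dots,x_n)$ of a free group on $x_1,\dots,x_n$; for a group $G$, $w(G)$ is the subgroup generated by all values $w(g_1,\dots,g_n)$, $g_i\in G$, and for a set $W$ of group words $W(G)$ is the subgroup generated by all $w(G)$, $w\in W$ (the verbal subgroup). *)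

theory Defs
  imports "HOL-Algebra.Algebra"
begin

definition skew_brace :: "('a, 'b) monoid_scheme \<Rightarrow> ('a, 'c) monoid_scheme \<Rightarrow> bool" where
  "skew_brace Ad Mu \<longleftrightarrow> group Ad \<and> group Mu \<and> carrier Ad = carrier Mu \<and>
     (\<forall>a\<in>carrier Ad. \<forall>b\<in>carrier Ad. \<forall>c\<in>carrier Ad.
        a \<otimes>\<^bsub>Mu\<^esub> (b \<otimes>\<^bsub>Ad\<^esub> c)
        = ((a \<otimes>\<^bsub>Mu\<^esub> b) \<otimes>\<^bsub>Ad\<^esub> inv\<^bsub>Ad\<^esub> a) \<otimes>\<^bsub>Ad\<^esub> (a \<otimes>\<^bsub>Mu\<^esub> c))"

text \<open>Group words: an element of the free group on x_0, x_1, ... represented by a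
  (not necessarily reduced) word, i.e. a list of letters (i, e) standing for
  x_i if e = False and x_i^{-1} if e = True.\<close>
type_synonym group_word = "(nat \<times> bool) list"

fun word_value :: "('a, 'b) monoid_scheme \<Rightarrow> group_word \<Rightarrow> (nat \<Rightarrow> 'a) \<Rightarrow> 'a" where
  "word_value G [] g = \<one>\<^bsub>G\<^esub>"
| "word_value G ((i, e) # w) g =
     (if e then inv\<^bsub>G\<^esub> (g i) else g i) \<otimes>\<^bsub>G\<^esub> word_value G w g"

definition verbal_subgroup :: "group_word set \<Rightarrow> ('a, 'b) monoid_scheme \<Rightarrow> 'a set" where
  "verbal_subgroup W G =
     generate G {word_value G w g | w g. w \<in> W \<and> g \<in> UNIV \<rightarrow> carrier G}"

definition characteristic_subgroup :: "'a set \<Rightarrow> ('a, 'b) monoid_scheme \<Rightarrow> bool" where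
  "characteristic_subgroup B G \<longleftrightarrow> subgroup B G \<and> (\<forall>\<sigma>\<in>auto G. \<sigma> ` B = B)"

end

theory Submission
  imports Defs
begin

(* For a in the skew brace, \<lambda>\<^sub>a(x) = \<ominus>a \<oplus> (a \<odot> x) is an automorphism of A\<^sub>\<oplus>, and
   a \<mapsto> \<lambda>\<^sub>a is a homomorphism A\<^sub>\<odot> \<rightarrow> Aut(A\<^sub>\<oplus>). Since B is characteristic, every
   automorphism of A\<^sub>\<oplus> induces one of A\<^sub>\<oplus>/B, so composing gives a homomorphism
   A\<^sub>\<odot> \<rightarrow> Aut(A\<^sub>\<oplus>/B). Homomorphisms map verbal subgroups into verbal subgroups, hence
   \<lambda>\<^sub>a induces the identity on A\<^sub>\<oplus>/B for every a \<in> W(A\<^sub>\<odot>). Both claims then follow from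
   a \<odot> b = a \<oplus> \<lambda>\<^sub>a(b) and \<lambda>\<^sub>a(a\<^sup>-\<^sup>1) = \<ominus>a. *)

lemma (in group) inv_mult_cancel_left [simp]:
  "x \<in> carrier G \<Longrightarrow> y \<in> carrier G \<Longrightarrow> inv x \<otimes> (x \<otimes> y) = y"
  by (simp add: m_assoc [symmetric])

lemma (in group) mult_inv_cancel_left [simp]:
  "x \<in> carrier G \<Longrightarrow> y \<in> carrier G \<Longrightarrow> x \<otimes> (inv x \<otimes> y) = y"
  by (simp add: m_assoc [symmetric])

lemma (in group) conjugation_in_auto:
  assumes "g \<in> carrier G"
  shows "(\<lambda>h\<in>carrier G. g \<otimes> h \<otimes> inv g) \<in> auto G"
proof -
  have "(\<lambda>h\<in>carrier G. g \<otimes> h \<otimes> inv g) \<in> hom G G"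
    using assms by (intro homI) (simp_all add: m_assoc)
  then show ?thesis
    using conjugation_is_bij [OF assms] by (simp add: auto_def Bij_def)
qed

lemma (in group) characteristic_subgroup_normal:
  assumes "characteristic_subgroup H G"
  shows "H \<lhd> G"
proof -
  have H: "subgroup H G" and auto_image: "\<And>\<sigma>. \<sigma> \<in> auto G \<Longrightarrow> \<sigma> ` H = H"
    using assms by (auto simp: characteristic_subgroup_def)
  show ?thesis
  proof (rule normal_invI [OF H])
    fix x h assume x: "x \<in> carrier G" and h: "h \<in> H"
    have "x \<otimes> h \<otimes> inv x \<in> (\<lambda>h\<in>carrier G. x \<otimes> h \<otimes> inv x) ` H"
      using h subgroup.mem_carrier [OF H h] by force
    then show "x \<otimes> h \<otimes> inv x \<in> H"
      unfolding auto_image [OF conjugation_in_auto [OF x]] .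
  qed
qed

lemma hom_image_rcos:
  assumes "\<sigma> \<in> hom G K" and "H \<subseteq> carrier G" and "x \<in> carrier G"
  shows "\<sigma> ` (H #>\<^bsub>G\<^esub> x) = \<sigma> ` H #>\<^bsub>K\<^esub> \<sigma> x"
  using assms by (force simp: r_coset_def hom_mult)

definition quotient_auto :: "('a, 'b) monoid_scheme \<Rightarrow> 'a set \<Rightarrow> ('a \<Rightarrow> 'a) \<Rightarrow> 'a set \<Rightarrow> 'a set"
  where "quotient_auto G H \<sigma> = (\<lambda>C\<in>carrier (G Mod H). \<sigma> ` C)"

lemma quotient_auto_rcos:
  assumes "\<sigma> \<in> hom G G" and "\<sigma> ` H = H" and "H \<subseteq> carrier G" and "x \<in> carrier G"
  shows "quotient_auto G H \<sigma> (H #>\<^bsub>G\<^esub> x) = H #>\<^bsub>G\<^esub> \<sigma> x"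
  using assms hom_image_rcos [OF assms(1,3,4)] by (auto simp: quotient_auto_def carrier_FactGroup)

lemma carrier_AutoGroup [simp]: "carrier (AutoGroup G) = auto G"
  by (simp add: AutoGroup_def BijGroup_def)

lemma one_AutoGroup [simp]: "\<one>\<^bsub>AutoGroup G\<^esub> = (\<lambda>x\<in>carrier G. x)"
  by (simp add: AutoGroup_def BijGroup_def)

lemma mult_AutoGroup:
  "\<sigma> \<in> auto G \<Longrightarrow> \<tau> \<in> auto G \<Longrightarrow> \<sigma> \<otimes>\<^bsub>AutoGroup G\<^esub> \<tau> = compose (carrier G) \<sigma> \<tau>"
  by (simp add: AutoGroup_def BijGroup_def auto_def)

context normal
begin

lemma FactGroup_carrier_subset: "C \<in> carrier (G Mod H) \<Longrightarrow> C \<subseteq> carrier G"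
  using r_coset_subset_G [OF subset] by (auto simp: carrier_FactGroup)

lemma quotient_auto_closed:
  assumes "\<sigma> \<in> hom G G" and "\<sigma> ` H = H" and "C \<in> carrier (G Mod H)"
  shows "quotient_auto G H \<sigma> C \<in> carrier (G Mod H)"
  using assms quotient_auto_rcos [OF assms(1,2) subset] hom_carrier [OF assms(1)]
  by (auto simp: carrier_FactGroup)

lemma quotient_auto_hom:
  assumes "\<sigma> \<in> hom G G" and "\<sigma> ` H = H"
  shows "quotient_auto G H \<sigma> \<in> hom (G Mod H) (G Mod H)"
proof (rule homI)
  fix C D assume "C \<in> carrier (G Mod H)" and "D \<in> carrier (G Mod H)"
  then obtain x y where x: "x \<in> carrier G" "C = H #> x" and y: "y \<in> carrier G" "D = H #> y"
    by (auto simp: carrier_FactGroup)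
  have [simp]: "\<sigma> z \<in> carrier G" if "z \<in> carrier G" for z
    using assms(1) that by (rule hom_in_carrier)
  show "quotient_auto G H \<sigma> (C \<otimes>\<^bsub>G Mod H\<^esub> D)
        = quotient_auto G H \<sigma> C \<otimes>\<^bsub>G Mod H\<^esub> quotient_auto G H \<sigma> D"
    using x y quotient_auto_rcos [OF assms subset]
    by (simp add: rcos_sum hom_mult [OF assms(1)])
qed (rule quotient_auto_closed [OF assms])

lemma quotient_auto_compose:
  assumes "\<sigma> \<in> hom G G" and "\<tau> \<in> hom G G" and "\<tau> ` H = H"
  shows "quotient_auto G H (compose (carrier G) \<sigma> \<tau>)
         = compose (carrier (G Mod H)) (quotient_auto G H \<sigma>) (quotient_auto G H \<tau>)"
proof
  fix C show "quotient_auto G H (compose (carrier G) \<sigma> \<tau>) C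
              = compose (carrier (G Mod H)) (quotient_auto G H \<sigma>) (quotient_auto G H \<tau>) C"
  proof (cases "C \<in> carrier (G Mod H)")
    case True
    then have "compose (carrier G) \<sigma> \<tau> ` C = \<sigma> ` \<tau> ` C"
      using FactGroup_carrier_subset by (force simp: compose_def)
    then show ?thesis
      using True quotient_auto_closed [OF assms(2,3) True] by (simp add: quotient_auto_def compose_def)
  qed (simp add: quotient_auto_def compose_def)
qed

lemma quotient_auto_id: "quotient_auto G H (\<lambda>x\<in>carrier G. x) = (\<lambda>C\<in>carrier (G Mod H). C)"
  unfolding quotient_auto_def
  using FactGroup_carrier_subset by (intro restrict_ext) (simp add: subset_iff)

end

lemma (in group) quotient_auto_hom_AutoGroup:
  assumes "characteristic_subgroup H G"
  shows "quotient_auto G H \<in> hom (AutoGroup G) (AutoGroup (G Mod H))"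
proof -
  interpret normal H G
    using assms by (rule characteristic_subgroup_normal)
  have auto_image: "\<sigma> ` H = H" if "\<sigma> \<in> auto G" for \<sigma>
    using assms that by (simp add: characteristic_subgroup_def)
  have compose: "quotient_auto G H (\<sigma> \<otimes>\<^bsub>AutoGroup G\<^esub> \<tau>)
      = compose (carrier (G Mod H)) (quotient_auto G H \<sigma>) (quotient_auto G H \<tau>)"
    if "\<sigma> \<in> auto G" and "\<tau> \<in> auto G" for \<sigma> \<tau>
    using that quotient_auto_compose auto_image by (simp add: mult_AutoGroup auto_def)
  have "quotient_auto G H \<sigma> \<in> auto (G Mod H)" if \<sigma>: "\<sigma> \<in> auto G" for \<sigma>
  proof -
    interpret Aut: group "AutoGroup G"
      by (rule AutoGroup)
    let ?\<rho> = "inv\<^bsub>AutoGroup G\<^esub> \<sigma>"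
    have \<rho>: "?\<rho> \<in> auto G"
      using \<sigma> Aut.inv_closed by simp
    have inverse: "quotient_auto G H \<alpha> (quotient_auto G H \<beta> C) = C"
      if "\<alpha> \<otimes>\<^bsub>AutoGroup G\<^esub> \<beta> = \<one>\<^bsub>AutoGroup G\<^esub>" "\<alpha> \<in> auto G" "\<beta> \<in> auto G"
        "C \<in> carrier (G Mod H)" for \<alpha> \<beta> C
    proof -
      have "compose (carrier (G Mod H)) (quotient_auto G H \<alpha>) (quotient_auto G H \<beta>)
            = (\<lambda>C\<in>carrier (G Mod H). C)"
        using compose [OF that(2,3)] that(1) quotient_auto_id by simp
      from fun_cong [OF this, of C] show ?thesis
        using that(4) by (simp add: compose_eq)
    qed
    have "bij_betw (quotient_auto G H \<sigma>) (carrier (G Mod H)) (carrier (G Mod H))"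
      using \<sigma> \<rho> inverse [of ?\<rho> \<sigma>] inverse [of \<sigma> ?\<rho>]
        quotient_auto_closed [of \<sigma>] quotient_auto_closed [of ?\<rho>] auto_image
      by (intro bij_betw_byWitness [where f' = "quotient_auto G H ?\<rho>"]) (auto simp: auto_def)
    then show ?thesis
      using \<sigma> quotient_auto_hom auto_image
      by (simp add: auto_def Bij_def quotient_auto_def)
  qed
  then show ?thesis
    using compose by (intro homI) (simp_all add: mult_AutoGroup)
qed

lemma (in group) word_value_closed:
  "g \<in> UNIV \<rightarrow> carrier G \<Longrightarrow> word_value G w g \<in> carrier G"
  by (induction w) (auto simp: Pi_iff)

lemma (in group_hom) hom_word_value:
  "g \<in> UNIV \<rightarrow> carrier G \<Longrightarrow> h (word_value G w g) = word_value H w (h \<circ> g)"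
  by (induction w) (auto simp: Pi_iff G.word_value_closed)

lemma (in group_hom) verbal_subgroup_image:
  "h ` verbal_subgroup W G \<subseteq> verbal_subgroup W H"
proof -
  let ?S = "\<lambda>K. {word_value K w g | w g. w \<in> W \<and> g \<in> UNIV \<rightarrow> carrier K}"
  have values_G: "?S G \<subseteq> carrier G"
    using G.word_value_closed by blast
  have "h ` ?S G \<subseteq> ?S H"
  proof
    fix y assume "y \<in> h ` ?S G"
    then obtain w g where "w \<in> W" "g \<in> UNIV \<rightarrow> carrier G" "y = h (word_value G w g)"
      by blast
    moreover have "h \<circ> g \<in> UNIV \<rightarrow> carrier H"
      using \<open>g \<in> UNIV \<rightarrow> carrier G\<close> by (auto simp: Pi_iff)
    ultimately show "y \<in> ?S H"
      using hom_word_value by blast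
  qed
  then have "generate H (h ` ?S G) \<subseteq> generate H (?S H)"
    by (rule H.mono_generate)
  then show ?thesis
    using generate_img [OF values_G] by (simp add: verbal_subgroup_def)
qed

lemma (in group) verbal_subgroup_subset: "verbal_subgroup W G \<subseteq> carrier G"
  using generate_in_carrier [of "{word_value G w g | w g. w \<in> W \<and> g \<in> UNIV \<rightarrow> carrier G}"]
    word_value_closed
  by (auto simp: verbal_subgroup_def)

locale skew_brace_struct =
  fixes Ad :: "('a, 'b) monoid_scheme" (structure) and Mu :: "('a, 'c) monoid_scheme"
  assumes skew_brace: "skew_brace Ad Mu"
begin

sublocale A: group Ad
  using skew_brace by (simp add: skew_brace_def)

sublocale M: group Mu
  using skew_brace by (simp add: skew_brace_def)

lemma carrier_Mu [simp]: "carrier Mu = carrier Ad"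
  using skew_brace by (simp add: skew_brace_def)

lemma mult_Mu_closed [simp]:
  "a \<in> carrier Ad \<Longrightarrow> b \<in> carrier Ad \<Longrightarrow> a \<otimes>\<^bsub>Mu\<^esub> b \<in> carrier Ad"
  using M.m_closed by simp

lemma inv_Mu_closed [simp]: "a \<in> carrier Ad \<Longrightarrow> inv\<^bsub>Mu\<^esub> a \<in> carrier Ad"
  using M.inv_closed by simp

lemma brace_distrib:
  "\<lbrakk>a \<in> carrier Ad; b \<in> carrier Ad; c \<in> carrier Ad\<rbrakk>
   \<Longrightarrow> a \<otimes>\<^bsub>Mu\<^esub> (b \<otimes> c) = (a \<otimes>\<^bsub>Mu\<^esub> b) \<otimes> inv a \<otimes> (a \<otimes>\<^bsub>Mu\<^esub> c)"
  using skew_brace by (simp add: skew_brace_def)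

lemma one_Mu [simp]: "\<one>\<^bsub>Mu\<^esub> = \<one>"
proof -
  have "\<one> = \<one>\<^bsub>Mu\<^esub> \<otimes>\<^bsub>Mu\<^esub> (\<one> \<otimes> \<one>)"
    by (metis A.one_closed A.r_one M.l_one carrier_Mu)
  also have "\<dots> = inv \<one>\<^bsub>Mu\<^esub>"
    using brace_distrib [of "\<one>\<^bsub>Mu\<^esub>" \<one> \<one>] M.one_closed by simp
  finally show ?thesis
    by (metis A.inv_inv A.inv_one M.one_closed carrier_Mu)
qed

lemma one_mult_Mu [simp]: "x \<in> carrier Ad \<Longrightarrow> \<one> \<otimes>\<^bsub>Mu\<^esub> x = x"
  using M.l_one by simp

definition lambda :: "'a \<Rightarrow> 'a \<Rightarrow> 'a"
  where "lambda a = (\<lambda>x\<in>carrier Ad. inv a \<otimes> (a \<otimes>\<^bsub>Mu\<^esub> x))"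

lemma lambda_closed [simp]:
  "a \<in> carrier Ad \<Longrightarrow> x \<in> carrier Ad \<Longrightarrow> lambda a x \<in> carrier Ad"
  by (simp add: lambda_def)

lemma mult_Mu_eq_lambda:
  "a \<in> carrier Ad \<Longrightarrow> b \<in> carrier Ad \<Longrightarrow> a \<otimes>\<^bsub>Mu\<^esub> b = a \<otimes> lambda a b"
  by (simp add: lambda_def)

lemma lambda_inv_Mu: "a \<in> carrier Ad \<Longrightarrow> lambda a (inv\<^bsub>Mu\<^esub> a) = inv a"
  by (simp add: lambda_def)

lemma lambda_hom: "a \<in> carrier Ad \<Longrightarrow> lambda a \<in> hom Ad Ad"
  by (intro homI) (simp_all add: lambda_def brace_distrib A.m_assoc)

lemma lambda_mult_Mu:
  assumes a: "a \<in> carrier Ad" and b: "b \<in> carrier Ad" and x: "x \<in> carrier Ad"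
  shows "lambda (a \<otimes>\<^bsub>Mu\<^esub> b) x = lambda a (lambda b x)"
proof -
  interpret group_hom Ad Ad "lambda a"
    using lambda_hom [OF a] by unfold_locales
  have "lambda a (lambda b x) = inv (lambda a b) \<otimes> lambda a (b \<otimes>\<^bsub>Mu\<^esub> x)"
    using b x by (simp add: lambda_def [of b])
  also have "\<dots> = inv (a \<otimes>\<^bsub>Mu\<^esub> b) \<otimes> (a \<otimes>\<^bsub>Mu\<^esub> (b \<otimes>\<^bsub>Mu\<^esub> x))"
    using a b x by (simp add: lambda_def A.inv_mult_group A.m_assoc)
  also have "\<dots> = lambda (a \<otimes>\<^bsub>Mu\<^esub> b) x"
    using a b x by (simp add: lambda_def M.m_assoc)
  finally show ?thesis ..
qed

lemma lambda_one: "lambda \<one> = (\<lambda>x\<in>carrier Ad. x)"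
  unfolding lambda_def by (intro restrict_ext) simp

lemma lambda_in_auto:
  assumes a: "a \<in> carrier Ad"
  shows "lambda a \<in> auto Ad"
proof -
  have "lambda b (lambda c x) = x"
    if "b \<otimes>\<^bsub>Mu\<^esub> c = \<one>" "b \<in> carrier Ad" "c \<in> carrier Ad" "x \<in> carrier Ad" for b c x
    using that lambda_mult_Mu [of b c x] by (simp add: lambda_one)
  then have "bij_betw (lambda a) (carrier Ad) (carrier Ad)"
    using a by (intro bij_betw_byWitness [where f' = "lambda (inv\<^bsub>Mu\<^esub> a)"]) auto
  then show ?thesis
    using lambda_hom [OF a] by (simp add: auto_def Bij_def lambda_def)
qed

lemma lambda_hom_AutoGroup: "lambda \<in> hom Mu (AutoGroup Ad)"
proof (rule homI)
  fix a b assume a: "a \<in> carrier Mu" and b: "b \<in> carrier Mu"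
  have "lambda (a \<otimes>\<^bsub>Mu\<^esub> b) x = compose (carrier Ad) (lambda a) (lambda b) x" for x
    using a b by (simp add: compose_def lambda_mult_Mu) (simp add: lambda_def)
  then show "lambda (a \<otimes>\<^bsub>Mu\<^esub> b) = lambda a \<otimes>\<^bsub>AutoGroup Ad\<^esub> lambda b"
    using a b by (simp add: mult_AutoGroup lambda_in_auto fun_eq_iff)
qed (simp add: lambda_in_auto)

lemma rcos_lambda_verbal_subgroup:
  assumes char: "characteristic_subgroup B Ad"
    and trivial: "verbal_subgroup W (AutoGroup (Ad Mod B)) = {\<one>\<^bsub>AutoGroup (Ad Mod B)\<^esub>}"
    and a: "a \<in> verbal_subgroup W Mu" and x: "x \<in> carrier Ad"
  shows "B #> lambda a x = B #> x"
proof -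
  interpret N: normal B Ad
    using char by (rule A.characteristic_subgroup_normal)
  interpret Q: group_hom Mu "AutoGroup (Ad Mod B)" "quotient_auto Ad B \<circ> lambda"
    using hom_compose [OF lambda_hom_AutoGroup A.quotient_auto_hom_AutoGroup [OF char]]
      group.AutoGroup [OF N.factorgroup_is_group]
    by (blast intro: group_hom.intro group_hom_axioms.intro M.is_group)
  have "quotient_auto Ad B (lambda a) = \<one>\<^bsub>AutoGroup (Ad Mod B)\<^esub>"
    using Q.verbal_subgroup_image trivial a by auto
  then have "quotient_auto Ad B (lambda a) (B #> x) = B #> x"
    using x by (simp add: carrier_FactGroup)
  moreover have a_Ad: "a \<in> carrier Ad"
    using a M.verbal_subgroup_subset by auto
  then have "lambda a ` B = B"
    using char lambda_in_auto by (simp add: characteristic_subgroup_def)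
  ultimately show ?thesis
    using quotient_auto_rcos [OF lambda_hom [OF a_Ad] _ N.subset x] by simp
qed

end

theorem proposition3p1:
  fixes Ad :: "('a, 'b) monoid_scheme" and Mu :: "('a, 'c) monoid_scheme"
    and B :: "'a set" and W :: "group_word set"
  assumes "skew_brace Ad Mu"
    and "characteristic_subgroup B Ad"
    and "verbal_subgroup W (AutoGroup (Ad Mod B)) = {\<one>\<^bsub>AutoGroup (Ad Mod B)\<^esub>}"
  shows "\<forall>a\<in>verbal_subgroup W Mu. \<forall>b\<in>verbal_subgroup W Mu.
           B #>\<^bsub>Ad\<^esub> (a \<otimes>\<^bsub>Mu\<^esub> b) = B #>\<^bsub>Ad\<^esub> (a \<otimes>\<^bsub>Ad\<^esub> b)
         \<and> B #>\<^bsub>Ad\<^esub> (inv\<^bsub>Mu\<^esub> a) = B #>\<^bsub>Ad\<^esub> (inv\<^bsub>Ad\<^esub> a)"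
proof (intro ballI conjI)
  interpret skew_brace_struct Ad Mu
    using assms(1) by unfold_locales
  interpret normal B Ad
    using assms(2) by (rule A.characteristic_subgroup_normal)
  fix a b assume a: "a \<in> verbal_subgroup W Mu" and b: "b \<in> verbal_subgroup W Mu"
  have a_Ad: "a \<in> carrier Ad" and b_Ad: "b \<in> carrier Ad"
    using a b M.verbal_subgroup_subset by auto
  note trivial = rcos_lambda_verbal_subgroup [OF assms(2,3) a]
  have "B #>\<^bsub>Ad\<^esub> (a \<otimes>\<^bsub>Mu\<^esub> b) = (B #>\<^bsub>Ad\<^esub> a) <#>\<^bsub>Ad\<^esub> (B #>\<^bsub>Ad\<^esub> lambda a b)"
    using a_Ad b_Ad by (simp add: mult_Mu_eq_lambda rcos_sum)
  also have "\<dots> = B #>\<^bsub>Ad\<^esub> (a \<otimes>\<^bsub>Ad\<^esub> b)"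
    using a_Ad b_Ad by (simp add: trivial rcos_sum)
  finally show "B #>\<^bsub>Ad\<^esub> (a \<otimes>\<^bsub>Mu\<^esub> b) = B #>\<^bsub>Ad\<^esub> (a \<otimes>\<^bsub>Ad\<^esub> b)" .
  show "B #>\<^bsub>Ad\<^esub> (inv\<^bsub>Mu\<^esub> a) = B #>\<^bsub>Ad\<^esub> (inv\<^bsub>Ad\<^esub> a)"
    using trivial [of "inv\<^bsub>Mu\<^esub> a"] a_Ad by (simp add: lambda_inv_Mu)
qed

end
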